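(* The functions $\omega_\pm$ are smooth on $R\setminus\{p_0\}$, and as $(x,y)\to p_0=(2,0)$, $$\omega_\pm=\frac{(x-2)\pm\sqrt{(x-2)^2+32y^2}}{4}+O\big((x-2)^2+32y^2\big).$$ For $(x,y)\in R_+$ one has $0\le\omega_+(x,y)\le 2|y|$, and for $(x,y)\in R_-$ one has $-2|y|\le\omega_-(x,y)\le 0$. Moreover, for each wedge $V_a$ there is a constant $C>0$ such that $|\omega_\pm(x,y)|\ge C|y|$ for $(x,y)\in V_a$.
   Context: For $x>0$, $y\in\mathbb{R}$ let $r_1^2=4+x^2+4x^2y^2$, $\Delta=((x+2)^2+8x^2y^2)((x-2)^2+8x^2y^2)$ and $$\omega_\pm(x,y)=\frac{x^2-4\pm\sqrt{\Delta}}{2r_1^2}.$$ (These are the eigenvalues of the bottom $2\times2$ block of the $3\times3$ symmetric tridiagonal matrix with spectrum $\{-1,0,1\}$ having bidiagonal coordinates $(x,y)$.) Let $p_0=(2,0)$, $R=\{(x,y): x>0,\ 4-4y^2-x^2y^2-8x^2y^4\ge 0\}$, $R_+=R\cap((0,2]\times\mathbb{R})$, $R_-=R\cap([2,\infty)\times\mathbb{R})$. For $0<a\le 1/10$ the wedge of height $a$ is $V_a=\{(x,y): |y|\le a,\ |y|\ge|x-2|/10\}$. *)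

theory Defs
  imports "HOL-Analysis.Analysis" "HOL-Library.Landau_Symbols"
begin

fun Ck_on :: "nat \<Rightarrow> 'a::euclidean_space set \<Rightarrow> ('a \<Rightarrow> real) \<Rightarrow> bool" where
  "Ck_on 0 S f = continuous_on S f"
| "Ck_on (Suc k) S f = (f differentiable_on S \<and>
      (\<forall>v\<in>Basis. Ck_on k S (\<lambda>z. frechet_derivative f (at z) v)))"

definition smooth_on :: "'a::euclidean_space set \<Rightarrow> ('a \<Rightarrow> real) \<Rightarrow> bool" where
  "smooth_on S f \<longleftrightarrow> open S \<and> (\<forall>k. Ck_on k S f)"

definition r1sq :: "real \<Rightarrow> real \<Rightarrow> real" where
  "r1sq x y = 4 + x^2 + 4 * x^2 * y^2"

definition Delta :: "real \<Rightarrow> real \<Rightarrow> real" where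
  "Delta x y = ((x + 2)^2 + 8 * x^2 * y^2) * ((x - 2)^2 + 8 * x^2 * y^2)"

definition omega_plus :: "real \<Rightarrow> real \<Rightarrow> real" where
  "omega_plus x y = (x^2 - 4 + sqrt (Delta x y)) / (2 * r1sq x y)"

definition omega_minus :: "real \<Rightarrow> real \<Rightarrow> real" where
  "omega_minus x y = (x^2 - 4 - sqrt (Delta x y)) / (2 * r1sq x y)"

definition p0 :: "real \<times> real" where "p0 = (2, 0)"

definition regR :: "(real \<times> real) set" where
  "regR = {(x, y). x > 0 \<and> 4 - 4 * y^2 - x^2 * y^2 - 8 * x^2 * y^4 \<ge> 0}"

definition regR_plus :: "(real \<times> real) set" where
  "regR_plus = regR \<inter> ({0<..2} \<times> UNIV)"

definition regR_minus :: "(real \<times> real) set" where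
  "regR_minus = regR \<inter> ({2..} \<times> UNIV)"

definition wedge :: "real \<Rightarrow> (real \<times> real) set" where
  "wedge a = {(x, y). \<bar>y\<bar> \<le> a \<and> \<bar>y\<bar> \<ge> \<bar>x - 2\<bar> / 10}"

end

theory Submission
  imports Defs
begin

text \<open>Away from \<open>p0\<close> (and for \<open>x > 0\<close>) the discriminant \<open>\<Delta>\<close> is positive, so \<open>\<omega>\<^sub>\<plusminus>\<close> are built
  from the coordinates by field operations and square roots of positive functions; this class
  of functions is closed under partial differentiation, hence consists of smooth functions.

  With \<open>u = x - 2\<close> and \<open>s = u\<^sup>2 + 32 y\<^sup>2\<close> one has \<open>\<Delta> = 16 s + O(s \<surd>s)\<close> and
  \<open>r\<^sub>1\<^sup>2 = 8 + O(\<surd>s)\<close> near \<open>p0\<close>, hence \<open>\<surd>\<Delta> = 4 \<surd>s + O(s)\<close> and \<open>\<omega>\<^sub>\<plusminus> = (u \<plusminus> \<surd>s)/4 + O(s)\<close>.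

  The identity \<open>\<Delta> = (x\<^sup>2 - 4)\<^sup>2 + 16 x\<^sup>2 y\<^sup>2 r\<^sub>1\<^sup>2\<close> gives
  \<open>\<bar>x\<^sup>2 - 4\<bar> \<le> \<surd>\<Delta> \<le> \<bar>x\<^sup>2 - 4\<bar> + 4 \<bar>y\<bar> r\<^sub>1\<^sup>2\<close>, which yields the sign bounds on \<open>R\<^sub>\<plusminus>\<close>.
  On the wedge both \<open>\<bar>\<omega>\<^sub>\<plusminus>\<bar> \<le> 12 \<bar>y\<bar>\<close>, while \<open>\<omega>\<^sub>+ \<omega>\<^sub>- = -4 x\<^sup>2 y\<^sup>2 / r\<^sub>1\<^sup>2\<close> is at least
  \<open>2 y\<^sup>2 / 7\<close> in size, so neither factor can be smaller than \<open>\<bar>y\<bar> / 42\<close>.\<close>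

inductive_set radical_funs :: "'a::real_normed_vector set \<Rightarrow> ('a \<Rightarrow> real) set" for U where
  radical_funs_const: "(\<lambda>z. c) \<in> radical_funs U"
| radical_funs_linear: "bounded_linear l \<Longrightarrow> l \<in> radical_funs U"
| radical_funs_add: "f \<in> radical_funs U \<Longrightarrow> g \<in> radical_funs U \<Longrightarrow> (\<lambda>z. f z + g z) \<in> radical_funs U"
| radical_funs_mult: "f \<in> radical_funs U \<Longrightarrow> g \<in> radical_funs U \<Longrightarrow> (\<lambda>z. f z * g z) \<in> radical_funs U"
| radical_funs_inverse:
    "f \<in> radical_funs U \<Longrightarrow> (\<forall>z\<in>U. f z \<noteq> 0) \<Longrightarrow> (\<lambda>z. inverse (f z)) \<in> radical_funs U"
| radical_funs_sqrt:
    "f \<in> radical_funs U \<Longrightarrow> (\<forall>z\<in>U. f z > 0) \<Longrightarrow> (\<lambda>z. sqrt (f z)) \<in> radical_funs U"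

lemma radical_funs_minus: "f \<in> radical_funs U \<Longrightarrow> (\<lambda>z. - f z) \<in> radical_funs U"
  using radical_funs_mult[OF radical_funs_const[of "-1"], of f U] by simp

lemma radical_funs_diff:
  "f \<in> radical_funs U \<Longrightarrow> g \<in> radical_funs U \<Longrightarrow> (\<lambda>z. f z - g z) \<in> radical_funs U"
  using radical_funs_add[OF _ radical_funs_minus, of f U g] by simp

lemma radical_funs_divide:
  "f \<in> radical_funs U \<Longrightarrow> g \<in> radical_funs U \<Longrightarrow> (\<forall>z\<in>U. g z \<noteq> 0) \<Longrightarrow>
    (\<lambda>z. f z / g z) \<in> radical_funs U"
  using radical_funs_mult[OF _ radical_funs_inverse, of f U g] by (simp add: divide_inverse)

lemma radical_funs_power2: "f \<in> radical_funs U \<Longrightarrow> (\<lambda>z. (f z)^2) \<in> radical_funs U"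
  using radical_funs_mult[of f U f] by (simp add: power2_eq_square)

lemma radical_funs_has_derivative:
  assumes "f \<in> radical_funs U"
  obtains D where "\<And>z. z \<in> U \<Longrightarrow> (f has_derivative D z) (at z)"
    and "\<And>v. (\<lambda>z. D z v) \<in> radical_funs U"
proof -
  from assms have "\<exists>D. (\<forall>z\<in>U. (f has_derivative D z) (at z)) \<and> (\<forall>v. (\<lambda>z. D z v) \<in> radical_funs U)"
  proof induction
    case (radical_funs_const c)
    show ?case
      by (intro exI[of _ "\<lambda>z h. 0"]) (auto intro: radical_funs.radical_funs_const)
  next
    case (radical_funs_linear l)
    then show ?case
      by (intro exI[of _ "\<lambda>z. l"]) (auto intro: radical_funs.radical_funs_const bounded_linear.has_derivative)
  next
    case (radical_funs_add f g)
    then obtain Df Dg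
      where "\<forall>z\<in>U. (f has_derivative Df z) (at z)" "\<forall>v. (\<lambda>z. Df z v) \<in> radical_funs U"
        and "\<forall>z\<in>U. (g has_derivative Dg z) (at z)" "\<forall>v. (\<lambda>z. Dg z v) \<in> radical_funs U"
      by blast
    then show ?case
      by (intro exI[of _ "\<lambda>z h. Df z h + Dg z h"])
        (auto intro!: radical_funs.radical_funs_add has_derivative_add)
  next
    case (radical_funs_mult f g)
    then obtain Df Dg
      where "\<forall>z\<in>U. (f has_derivative Df z) (at z)" "\<forall>v. (\<lambda>z. Df z v) \<in> radical_funs U"
        and "\<forall>z\<in>U. (g has_derivative Dg z) (at z)" "\<forall>v. (\<lambda>z. Dg z v) \<in> radical_funs U"
      by blast
    with radical_funs_mult.hyps show ?case
      by (intro exI[of _ "\<lambda>z h. f z * Dg z h + Df z h * g z"])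
        (auto intro!: radical_funs.radical_funs_add radical_funs.radical_funs_mult has_derivative_mult)
  next
    case (radical_funs_inverse f)
    then obtain Df
      where "\<forall>z\<in>U. (f has_derivative Df z) (at z)" "\<forall>v. (\<lambda>z. Df z v) \<in> radical_funs U"
      by blast
    with radical_funs_inverse.hyps show ?case
      by (intro exI[of _ "\<lambda>z h. - (inverse (f z) * Df z h * inverse (f z))"])
        (auto intro!: radical_funs.radical_funs_mult radical_funs.radical_funs_inverse radical_funs_minus
          has_derivative_inverse)
  next
    case (radical_funs_sqrt f)
    then obtain Df
      where Df: "\<forall>z\<in>U. (f has_derivative Df z) (at z)" "\<forall>v. (\<lambda>z. Df z v) \<in> radical_funs U"
      by blast
    have "((\<lambda>z. sqrt (f z)) has_derivative (\<lambda>h. Df z h * (inverse (sqrt (f z)) / 2))) (at z)"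
      if "z \<in> U" for z
      using DERIV_compose_FDERIV[OF DERIV_real_sqrt Df(1)[rule_format, OF that]]
        radical_funs_sqrt.hyps that by simp
    moreover have "(\<lambda>z. Df z v * (inverse (sqrt (f z)) / 2)) \<in> radical_funs U" for v
      using Df(2) radical_funs_sqrt.hyps
      by (intro radical_funs.radical_funs_mult radical_funs_divide radical_funs.radical_funs_inverse
          radical_funs.radical_funs_sqrt radical_funs.radical_funs_const) auto
    ultimately show ?case
      by (intro exI[of _ "\<lambda>z h. Df z h * (inverse (sqrt (f z)) / 2)"]) auto
  qed
  then show ?thesis using that by blast
qed

lemma Ck_on_cong:
  assumes "open S" "\<And>z. z \<in> S \<Longrightarrow> f z = g z" "Ck_on k S f"
  shows "Ck_on k S g"
  using assms(2,3)
proof (induction k arbitrary: f g)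
  case 0
  then show ?case using continuous_on_cong by (metis Ck_on.simps(1))
next
  case (Suc k)
  have Dg: "(g has_derivative frechet_derivative f (at z)) (at z)" if "z \<in> S" for z
  proof -
    have "f differentiable at z"
      using Suc.prems that assms(1) by (simp add: differentiable_on_eq_differentiable_at)
    then show ?thesis
      using has_derivative_transform_within_open[OF _ assms(1) that] Suc.prems frechet_derivative_works
      by blast
  qed
  then have "g differentiable at z" if "z \<in> S" for z
    using that by (auto simp: differentiable_def)
  moreover have "frechet_derivative g (at z) = frechet_derivative f (at z)" if "z \<in> S" for z
    using frechet_derivative_at[OF Dg[OF that]] by simp
  ultimately show ?case
    using Suc.prems Suc.IH[of "\<lambda>z. frechet_derivative f (at z) v" "\<lambda>z. frechet_derivative g (at z) v"
      for v] assms(1)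
    by (auto simp: differentiable_on_eq_differentiable_at)
qed

lemma radical_funs_Ck_on:
  fixes f :: "'a::euclidean_space \<Rightarrow> real"
  assumes "open U" "f \<in> radical_funs U"
  shows "Ck_on k U f"
  using assms(2)
proof (induction k arbitrary: f)
  case 0
  then obtain D where "\<And>z. z \<in> U \<Longrightarrow> (f has_derivative D z) (at z)"
    by (rule radical_funs_has_derivative) blast
  then show ?case
    by (auto intro!: continuous_at_imp_continuous_on dest: has_derivative_continuous)
next
  case (Suc k)
  obtain D where D: "\<And>z. z \<in> U \<Longrightarrow> (f has_derivative D z) (at z)"
    "\<And>v. (\<lambda>z. D z v) \<in> radical_funs U"
    using radical_funs_has_derivative[OF Suc.prems] by blast
  have "f differentiable_on U"
    using D(1) assms(1) by (auto simp: differentiable_on_eq_differentiable_at differentiable_def)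
  moreover have "Ck_on k U (\<lambda>z. frechet_derivative f (at z) v)" for v
  proof (rule Ck_on_cong[OF assms(1) _ Suc.IH[OF D(2)]])
    show "D z v = frechet_derivative f (at z) v" if "z \<in> U" for z
      using frechet_derivative_at[OF D(1)[OF that]] by simp
  qed
  ultimately show ?case by simp
qed

lemma radical_funs_smooth_on:
  fixes f :: "'a::euclidean_space \<Rightarrow> real"
  shows "open U \<Longrightarrow> f \<in> radical_funs U \<Longrightarrow> smooth_on U f"
  by (simp add: smooth_on_def radical_funs_Ck_on)

lemma radical_funs_fst: "fst \<in> radical_funs U"
  by (rule radical_funs_linear[OF bounded_linear_fst])

lemma radical_funs_snd: "snd \<in> radical_funs U"
  by (rule radical_funs_linear[OF bounded_linear_snd])

lemma r1sq_pos: "r1sq x y > 0"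
  unfolding r1sq_def by (simp add: add_pos_nonneg)

lemma Delta_eq: "Delta x y = (x^2 - 4)^2 + 16 * x^2 * y^2 * r1sq x y"
  unfolding Delta_def r1sq_def by algebra

lemma Delta_nonneg: "Delta x y \<ge> 0"
  unfolding Delta_def by simp

lemma Delta_pos:
  assumes "x > 0" "(x, y) \<noteq> p0"
  shows "Delta x y > 0"
proof -
  have "(x - 2)^2 + 8 * x^2 * y^2 > 0"
    using assms by (auto simp: p0_def add_pos_nonneg add_nonneg_pos)
  moreover have "(x + 2)^2 + 8 * x^2 * y^2 > 0"
    using assms by (simp add: add_pos_nonneg)
  ultimately show ?thesis unfolding Delta_def by simp
qed

lemma radical_funs_omega:
  defines "U \<equiv> {p. 0 < fst p} - {p0}"
  shows "(\<lambda>p. omega_plus (fst p) (snd p)) \<in> radical_funs U"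
    and "(\<lambda>p. omega_minus (fst p) (snd p)) \<in> radical_funs U"
proof -
  have "(\<lambda>p. Delta (fst p) (snd p)) \<in> radical_funs U"
    unfolding Delta_def
    by (intro radical_funs_mult radical_funs_add radical_funs_diff radical_funs_power2
        radical_funs_const radical_funs_fst radical_funs_snd)
  then have sqrt_Delta: "(\<lambda>p. sqrt (Delta (fst p) (snd p))) \<in> radical_funs U"
    by (rule radical_funs_sqrt) (auto simp: U_def intro!: Delta_pos)
  have r1sq: "(\<lambda>p. r1sq (fst p) (snd p)) \<in> radical_funs U"
    unfolding r1sq_def
    by (intro radical_funs_mult radical_funs_add radical_funs_power2
        radical_funs_const radical_funs_fst radical_funs_snd)
  have r1sq_nonzero: "\<forall>p\<in>U. 2 * r1sq (fst p) (snd p) \<noteq> 0"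
    by (simp add: r1sq_pos[THEN less_imp_neq, symmetric])
  show "(\<lambda>p. omega_plus (fst p) (snd p)) \<in> radical_funs U"
    unfolding omega_plus_def
    by (intro radical_funs_divide radical_funs_add radical_funs_diff radical_funs_mult
        radical_funs_power2 radical_funs_const radical_funs_fst sqrt_Delta r1sq r1sq_nonzero)
  show "(\<lambda>p. omega_minus (fst p) (snd p)) \<in> radical_funs U"
    unfolding omega_minus_def
    by (intro radical_funs_divide radical_funs_diff radical_funs_mult
        radical_funs_power2 radical_funs_const radical_funs_fst sqrt_Delta r1sq r1sq_nonzero)
qed

lemma smooth_on_omega:
  defines "U \<equiv> {p. 0 < fst p} - {p0}"
  shows "smooth_on U (\<lambda>p. omega_plus (fst p) (snd p))"
    and "smooth_on U (\<lambda>p. omega_minus (fst p) (snd p))"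
proof -
  have "open U"
    unfolding U_def by (intro open_Diff open_Collect_less continuous_intros finite.intros)
  then show "smooth_on U (\<lambda>p. omega_plus (fst p) (snd p))"
    and "smooth_on U (\<lambda>p. omega_minus (fst p) (snd p))"
    using radical_funs_omega radical_funs_smooth_on unfolding U_def by blast+
qed

lemma abs_x2_minus_4_le_sqrt_Delta: "\<bar>x^2 - 4\<bar> \<le> sqrt (Delta x y)"
proof -
  have "(x^2 - 4)^2 \<le> Delta x y"
    unfolding Delta_eq using r1sq_pos[of x y] by simp
  then show ?thesis
    using real_sqrt_le_mono by fastforce
qed

lemma sqrt_Delta_le: "sqrt (Delta x y) \<le> \<bar>x^2 - 4\<bar> + 4 * \<bar>y\<bar> * r1sq x y"
proof (rule real_le_lsqrt)
  define c where "c = \<bar>x^2 - 4\<bar>"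
  have c: "c \<ge> 0" "c^2 = (x^2 - 4)^2"
    unfolding c_def by simp_all
  have r: "r1sq x y > 0" "r1sq x y \<ge> x^2"
    by (simp_all add: r1sq_pos) (simp add: r1sq_def)
  then show "0 \<le> \<bar>x^2 - 4\<bar> + 4 * \<bar>y\<bar> * r1sq x y"
    by simp
  have "(c + 4 * \<bar>y\<bar> * r1sq x y)^2 - Delta x y
        = 8 * \<bar>y\<bar> * r1sq x y * c + 16 * y^2 * r1sq x y * (r1sq x y - x^2)"
    unfolding Delta_eq using c(2) by (simp add: power2_eq_square algebra_simps)
  also have "\<dots> \<ge> 0"
    using c r by simp
  finally show "Delta x y \<le> (\<bar>x^2 - 4\<bar> + 4 * \<bar>y\<bar> * r1sq x y)^2"
    unfolding c_def by simp
qed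

lemma omega_plus_bounds:
  assumes "\<bar>x\<bar> \<le> 2"
  shows "0 \<le> omega_plus x y" "omega_plus x y \<le> 2 * \<bar>y\<bar>"
proof -
  have "x^2 \<le> 2^2"
    using assms by (metis abs_le_square_iff abs_numeral)
  then have "\<bar>x^2 - 4\<bar> = 4 - x^2"
    by simp
  then have "0 \<le> x^2 - 4 + sqrt (Delta x y)" "x^2 - 4 + sqrt (Delta x y) \<le> 2 * \<bar>y\<bar> * (2 * r1sq x y)"
    using abs_x2_minus_4_le_sqrt_Delta[of x y] sqrt_Delta_le[of x y] by linarith+
  then show "0 \<le> omega_plus x y" "omega_plus x y \<le> 2 * \<bar>y\<bar>"
    unfolding omega_plus_def using r1sq_pos[of x y] by (simp_all add: pos_divide_le_eq)
qed

lemma omega_minus_bounds: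
  assumes "2 \<le> \<bar>x\<bar>"
  shows "- 2 * \<bar>y\<bar> \<le> omega_minus x y" "omega_minus x y \<le> 0"
proof -
  have "2^2 \<le> x^2"
    using assms by (metis abs_le_square_iff abs_numeral)
  then have "\<bar>x^2 - 4\<bar> = x^2 - 4"
    by simp
  then have "- 2 * \<bar>y\<bar> * (2 * r1sq x y) \<le> x^2 - 4 - sqrt (Delta x y)" "x^2 - 4 - sqrt (Delta x y) \<le> 0"
    using abs_x2_minus_4_le_sqrt_Delta[of x y] sqrt_Delta_le[of x y] by linarith+
  then show "- 2 * \<bar>y\<bar> \<le> omega_minus x y" "omega_minus x y \<le> 0"
    unfolding omega_minus_def using r1sq_pos[of x y]
    by (simp_all add: pos_le_divide_eq divide_nonpos_pos)
qed

lemma abs_sqrt_diff_mult_sqrt_le: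
  fixes a b :: real
  assumes "0 \<le> a" "0 \<le> b"
  shows "\<bar>sqrt a - sqrt b\<bar> * sqrt b \<le> \<bar>a - b\<bar>"
proof -
  have "\<bar>sqrt a - sqrt b\<bar> * sqrt b \<le> \<bar>sqrt a - sqrt b\<bar> * (sqrt a + sqrt b)"
    using assms by (intro mult_left_mono) auto
  also have "\<dots> = \<bar>(sqrt a - sqrt b) * (sqrt a + sqrt b)\<bar>"
    using assms by (simp add: abs_mult abs_of_nonneg)
  also have "\<dots> = \<bar>a - b\<bar>"
    using assms by (simp add: algebra_simps)
  finally show ?thesis .
qed

lemma near_p0_bounds:
  fixes x y :: real
  assumes "\<bar>x - 2\<bar> \<le> 1/10" "\<bar>y\<bar> \<le> 1/10"
  defines "b \<equiv> sqrt ((x - 2)^2 + 32 * y^2)"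
  shows "\<bar>x - 2\<bar> \<le> b" "(x - 2)^2 \<le> b / 10" "y^2 \<le> b / 50" "3 \<le> x^2" "x^2 \<le> 5"
proof -
  show u: "\<bar>x - 2\<bar> \<le> b"
    unfolding b_def by (rule real_le_rsqrt) simp
  have y: "5 * \<bar>y\<bar> \<le> b"
    unfolding b_def by (rule real_le_rsqrt) (simp add: power_mult_distrib)
  have "\<bar>x - 2\<bar> * \<bar>x - 2\<bar> \<le> \<bar>x - 2\<bar> * (1/10)" "\<bar>y\<bar> * \<bar>y\<bar> \<le> \<bar>y\<bar> * (1/10)"
    using assms by (intro mult_left_mono; simp)+
  then show "(x - 2)^2 \<le> b / 10" "y^2 \<le> b / 50"
    using u y by (simp_all add: power2_eq_square abs_mult[symmetric])
  have "19/10 \<le> x" "x \<le> 21/10"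
    using assms(1) by linarith+
  then have "(19/10)^2 \<le> x^2" "x^2 \<le> (21/10)^2"
    by (intro power_mono; simp)+
  then show "3 \<le> x^2" "x^2 \<le> 5"
    by (simp_all add: power2_eq_square)
qed

lemma Delta_near_p0:
  fixes x y :: real
  assumes "\<bar>x - 2\<bar> \<le> 1/10" "\<bar>y\<bar> \<le> 1/10"
  defines "s \<equiv> (x - 2)^2 + 32 * y^2"
  shows "\<bar>Delta x y - 16 * s\<bar> \<le> 38 * s * sqrt s"
proof -
  define u b Z where "u = x - 2" and "b = sqrt s" and "Z = x^2 * y^2"
  note bounds = near_p0_bounds[OF assms(1,2), folded s_def b_def u_def]
  have s: "0 \<le> s" "y^2 \<le> s / 32" "b * b = s"
    unfolding s_def b_def by simp_all
  have s_u: "s = u^2 + 32 * y^2"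
    unfolding s_def u_def ..
  have Z5: "Z \<le> 5 * y^2"
    using mult_right_mono[OF bounds(5), of "y^2"] unfolding Z_def by simp
  then have Z: "0 \<le> Z" "Z \<le> b / 10"
    using bounds(3) unfolding Z_def by simp_all
  have "Delta x y - 16 * s = (8 * u + u^2 + 8 * Z) * (u^2 + 8 * Z) + 128 * y^2 * (u * (u + 4))"
    unfolding Delta_def s_def Z_def u_def by algebra
  moreover have "\<bar>(8 * u + u^2 + 8 * Z) * (u^2 + 8 * Z)\<bar> \<le> (9 * b) * (2 * s)"
  proof -
    have "\<bar>8 * u + u^2 + 8 * Z\<bar> \<le> 9 * b"
      using bounds(1,2) Z zero_le_power2[of u] unfolding abs_le_iff by linarith
    moreover have "0 \<le> u^2 + 8 * Z" "u^2 + 8 * Z \<le> 2 * s"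
      using Z Z5 s_u zero_le_power2[of u] zero_le_power2[of y] by linarith+
    ultimately show ?thesis
      unfolding abs_mult by (intro mult_mono) auto
  qed
  moreover have "\<bar>128 * y^2 * (u * (u + 4))\<bar> \<le> 128 * (s / 32) * (b * 5)"
  proof -
    have "\<bar>u + 4\<bar> \<le> 5"
      using assms(1) unfolding u_def abs_le_iff by linarith
    then show ?thesis
      unfolding abs_mult using s bounds(1) by (intro mult_mono) auto
  qed
  ultimately have "\<bar>Delta x y - 16 * s\<bar> \<le> 18 * (b * s) + 20 * (b * s)"
    by (simp add: algebra_simps)
  then show ?thesis
    by (simp add: b_def algebra_simps)
qed

lemma sqrt_Delta_near_p0:
  fixes x y :: real
  assumes "\<bar>x - 2\<bar> \<le> 1/10" "\<bar>y\<bar> \<le> 1/10"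
  defines "s \<equiv> (x - 2)^2 + 32 * y^2"
  shows "\<bar>sqrt (Delta x y) - 4 * sqrt s\<bar> \<le> 10 * s"
proof (cases "s = 0")
  case True
  then have "x = 2" "y = 0"
    unfolding s_def by (simp_all add: add_nonneg_eq_0_iff)
  then show ?thesis
    using True by (simp add: Delta_def)
next
  case False
  then have "sqrt s > 0"
    unfolding s_def by (simp add: add_nonneg_pos less_le)
  have "\<bar>sqrt (Delta x y) - sqrt (16 * s)\<bar> * sqrt (16 * s) \<le> \<bar>Delta x y - 16 * s\<bar>"
    by (rule abs_sqrt_diff_mult_sqrt_le) (simp_all add: Delta_nonneg s_def)
  also have "\<dots> \<le> 38 * s * sqrt s"
    using Delta_near_p0[OF assms(1,2)] unfolding s_def .
  finally have "(\<bar>sqrt (Delta x y) - 4 * sqrt s\<bar> * 4) * sqrt s \<le> (38 * s) * sqrt s"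
    by (simp add: real_sqrt_mult mult_ac)
  with \<open>sqrt s > 0\<close> show ?thesis
    by simp
qed

lemma r1sq_near_p0:
  fixes x y :: real
  assumes "\<bar>x - 2\<bar> \<le> 1/10" "\<bar>y\<bar> \<le> 1/10"
  shows "\<bar>r1sq x y - 8\<bar> \<le> 5 * sqrt ((x - 2)^2 + 32 * y^2)"
proof -
  define u b Z where "u = x - 2" and "b = sqrt ((x - 2)^2 + 32 * y^2)" and "Z = x^2 * y^2"
  note bounds = near_p0_bounds[OF assms, folded b_def u_def]
  have "r1sq x y - 8 = 4 * u + u^2 + 4 * Z"
    unfolding r1sq_def u_def Z_def by algebra
  moreover have "0 \<le> Z" "Z \<le> 5 * y^2"
    using mult_right_mono[OF bounds(5), of "y^2"] unfolding Z_def by simp_all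
  ultimately have "\<bar>r1sq x y - 8\<bar> \<le> 5 * b"
    using bounds(1-3) zero_le_power2[of u] by arith
  then show ?thesis
    unfolding b_def .
qed

text \<open>Writing \<open>u = x - 2\<close> and \<open>r1sq = 8 + E\<close>, the error times \<open>4 r1sq\<close> equals
  \<open>2u\<^sup>2 - E u + \<sigma> (2 (\<surd>\<Delta> - 4 \<surd>s) - E \<surd>s)\<close>, and each of these terms is \<open>O(s)\<close>.\<close>

lemma omega_sign_near_p0:
  fixes x y \<sigma> :: real
  assumes "\<bar>\<sigma>\<bar> = 1" "\<bar>x - 2\<bar> \<le> 1/10" "\<bar>y\<bar> \<le> 1/10"
  defines "s \<equiv> (x - 2)^2 + 32 * y^2"
  shows "\<bar>(x^2 - 4 + \<sigma> * sqrt (Delta x y)) / (2 * r1sq x y) - ((x - 2) + \<sigma> * sqrt s) / 4\<bar>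
    \<le> 2 * s"
proof -
  define u b R E where "u = x - 2" and "b = sqrt s" and "R = r1sq x y" and "E = r1sq x y - 8"
  define e where "e = (x^2 - 4 + \<sigma> * sqrt (Delta x y)) / (2 * R) - (u + \<sigma> * b) / 4"
  have s: "0 \<le> s" "u^2 \<le> s" "b * b = s" "0 \<le> b" "\<bar>u\<bar> \<le> b"
    using near_p0_bounds(1)[OF assms(2,3)] unfolding s_def b_def u_def by simp_all
  have E: "\<bar>E\<bar> \<le> 5 * b"
    using r1sq_near_p0[OF assms(2,3)] unfolding E_def b_def s_def .
  have "0 \<le> 4 * x^2 * y^2"
    by simp
  then have "R \<ge> 7"
    using near_p0_bounds(4)[OF assms(2,3)] unfolding R_def r1sq_def by linarith
  have "4 * R * e = 2 * u^2 - E * u + \<sigma> * (2 * (sqrt (Delta x y) - 4 * b) - E * b)"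
    using \<open>R \<ge> 7\<close> unfolding e_def E_def R_def u_def by (simp add: field_simps power2_eq_square)
  also have "\<bar>\<dots>\<bar> \<le> 32 * s"
  proof -
    have "\<bar>E * u\<bar> \<le> 5 * b * b" "\<bar>E * b\<bar> \<le> 5 * b * b"
      unfolding abs_mult using E s by (auto intro!: mult_mono)
    then have "\<bar>E * u\<bar> \<le> 5 * s" "\<bar>E * b\<bar> \<le> 5 * s"
      by (simp_all add: s(3)[symmetric] mult.assoc)
    moreover have "\<bar>sqrt (Delta x y) - 4 * b\<bar> \<le> 10 * s"
      using sqrt_Delta_near_p0[OF assms(2,3)] unfolding b_def s_def .
    ultimately have "\<bar>\<sigma> * (2 * (sqrt (Delta x y) - 4 * b) - E * b)\<bar> \<le> 25 * s"
      unfolding abs_mult[of \<sigma>] assms(1) by (smt (verit))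
    with \<open>\<bar>E * u\<bar> \<le> 5 * s\<close> \<open>u^2 \<le> s\<close> zero_le_power2[of u] show ?thesis
      by (smt (verit))
  qed
  finally have "4 * R * \<bar>e\<bar> \<le> 32 * s"
    using \<open>R \<ge> 7\<close> by (simp add: abs_mult)
  moreover have "4 * 7 * \<bar>e\<bar> \<le> 4 * R * \<bar>e\<bar>"
    using \<open>R \<ge> 7\<close> by (intro mult_right_mono) auto
  ultimately have "\<bar>e\<bar> \<le> 2 * s"
    using s(1) by linarith
  then show ?thesis
    unfolding e_def R_def u_def b_def .
qed

lemma omega_sign_bigo:
  fixes \<sigma> :: real
  assumes "\<bar>\<sigma>\<bar> = 1"
  shows "(\<lambda>p. (fst p^2 - 4 + \<sigma> * sqrt (Delta (fst p) (snd p))) / (2 * r1sq (fst p) (snd p))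
            - ((fst p - 2) + \<sigma> * sqrt ((fst p - 2)^2 + 32 * (snd p)^2)) / 4)
        \<in> O[at p0 within S](\<lambda>p. (fst p - 2)^2 + 32 * (snd p)^2)"
proof (rule bigoI[where c = 2])
  have "norm ((x^2 - 4 + \<sigma> * sqrt (Delta x y)) / (2 * r1sq x y)
              - ((x - 2) + \<sigma> * sqrt ((x - 2)^2 + 32 * y^2)) / 4)
      \<le> 2 * norm ((x - 2)^2 + 32 * y^2)" if "dist (x, y) p0 < 1/10" for x y :: real
  proof -
    have "\<bar>x - 2\<bar> \<le> 1/10" "\<bar>y\<bar> \<le> 1/10"
      using that dist_fst_le[of "(x, y)" p0] dist_snd_le[of "(x, y)" p0]
      by (simp_all add: p0_def dist_real_def)
    then show ?thesis
      using omega_sign_near_p0[OF assms] by simp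
  qed
  then show "\<forall>\<^sub>F p in at p0 within S.
      norm ((fst p^2 - 4 + \<sigma> * sqrt (Delta (fst p) (snd p))) / (2 * r1sq (fst p) (snd p))
            - ((fst p - 2) + \<sigma> * sqrt ((fst p - 2)^2 + 32 * (snd p)^2)) / 4)
      \<le> 2 * norm ((fst p - 2)^2 + 32 * (snd p)^2)"
    unfolding eventually_at by (intro exI[of _ "1/10"]) auto
qed

lemma omega_plus_expansion:
  "(\<lambda>p. omega_plus (fst p) (snd p) - ((fst p - 2) + sqrt ((fst p - 2)^2 + 32 * (snd p)^2)) / 4)
    \<in> O[at p0 within S](\<lambda>p. (fst p - 2)^2 + 32 * (snd p)^2)"
  using omega_sign_bigo[of 1] by (simp add: omega_plus_def)

lemma omega_minus_expansion:
  "(\<lambda>p. omega_minus (fst p) (snd p) - ((fst p - 2) - sqrt ((fst p - 2)^2 + 32 * (snd p)^2)) / 4)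
    \<in> O[at p0 within S](\<lambda>p. (fst p - 2)^2 + 32 * (snd p)^2)"
  using omega_sign_bigo[of "-1"] by (simp add: omega_minus_def)

lemma omega_plus_times_omega_minus:
  "omega_plus x y * omega_minus x y = - 4 * x^2 * y^2 / r1sq x y"
proof -
  have "omega_plus x y * omega_minus x y
      = ((x^2 - 4)^2 - sqrt (Delta x y)^2) / (2 * r1sq x y)^2"
    unfolding omega_plus_def omega_minus_def by (simp add: power2_eq_square algebra_simps)
  also have "\<dots> = - 16 * x^2 * y^2 * r1sq x y / (2 * r1sq x y)^2"
    by (simp only: real_sqrt_pow2[OF Delta_nonneg]) (simp add: Delta_eq)
  also have "\<dots> = - 4 * x^2 * y^2 / r1sq x y"
    using r1sq_pos[of x y] by (simp add: power2_eq_square)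
  finally show ?thesis .
qed

lemma abs_omega_le:
  "\<bar>omega_plus x y\<bar> \<le> \<bar>x^2 - 4\<bar> / r1sq x y + 2 * \<bar>y\<bar>"
  "\<bar>omega_minus x y\<bar> \<le> \<bar>x^2 - 4\<bar> / r1sq x y + 2 * \<bar>y\<bar>"
proof -
  have R: "r1sq x y > 0"
    by (rule r1sq_pos)
  have "\<bar>x^2 - 4 + sqrt (Delta x y)\<bar> \<le> 2 * \<bar>x^2 - 4\<bar> + 4 * \<bar>y\<bar> * r1sq x y"
    "\<bar>x^2 - 4 - sqrt (Delta x y)\<bar> \<le> 2 * \<bar>x^2 - 4\<bar> + 4 * \<bar>y\<bar> * r1sq x y"
    using sqrt_Delta_le[of x y] real_sqrt_ge_zero[OF Delta_nonneg[of x y]] by (smt (verit))+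
  moreover have bound_eq: "(2 * \<bar>x^2 - 4\<bar> + 4 * \<bar>y\<bar> * r1sq x y) / (2 * r1sq x y)
      = \<bar>x^2 - 4\<bar> / r1sq x y + 2 * \<bar>y\<bar>"
    using R by (simp add: field_simps)
  ultimately show "\<bar>omega_plus x y\<bar> \<le> \<bar>x^2 - 4\<bar> / r1sq x y + 2 * \<bar>y\<bar>"
    "\<bar>omega_minus x y\<bar> \<le> \<bar>x^2 - 4\<bar> / r1sq x y + 2 * \<bar>y\<bar>"
    unfolding omega_plus_def omega_minus_def using R
    by (simp_all add: divide_right_mono flip: bound_eq)
qed

lemma wedge_mono: "a \<le> b \<Longrightarrow> wedge a \<subseteq> wedge b"
  by (auto simp: wedge_def)

lemma omega_bounds_on_wedge:
  assumes "(x, y) \<in> wedge (1/10)"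
  shows "\<bar>omega_plus x y\<bar> \<le> 12 * \<bar>y\<bar>" "\<bar>omega_minus x y\<bar> \<le> 12 * \<bar>y\<bar>"
    and "2/7 * \<bar>y\<bar>^2 \<le> \<bar>omega_plus x y\<bar> * \<bar>omega_minus x y\<bar>"
proof -
  have w: "\<bar>x - 2\<bar> \<le> 10 * \<bar>y\<bar>" "\<bar>y\<bar> \<le> 1/10"
    using assms by (auto simp: wedge_def)
  then have x: "1 \<le> x" "x \<le> 3"
    by auto
  then have x2: "1 \<le> x^2" "x^2 \<le> 9"
    using power_mono[of 1 x 2] power_mono[of x 3 2] by simp_all
  have y2: "y^2 \<le> 1/100"
    using power_mono[OF w(2), of 2] by (simp add: power_divide)
  have "0 \<le> 4 * x^2 * y^2" "4 * x^2 * y^2 \<le> 4 * 9 * (1/100)"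
    using mult_mono[OF x2(2) y2] by simp_all
  then have R: "5 \<le> r1sq x y" "r1sq x y \<le> 14"
    using x2 unfolding r1sq_def by linarith+
  have "\<bar>x^2 - 4\<bar> = \<bar>x - 2\<bar> * \<bar>x + 2\<bar>"
    by (simp add: abs_mult[symmetric] power2_eq_square algebra_simps)
  also have "\<dots> \<le> (10 * \<bar>y\<bar>) * 5"
    using w x by (intro mult_mono) auto
  finally have "\<bar>x^2 - 4\<bar> / r1sq x y \<le> 50 * \<bar>y\<bar> / 5"
    using R by (intro frac_le) auto
  then show "\<bar>omega_plus x y\<bar> \<le> 12 * \<bar>y\<bar>" "\<bar>omega_minus x y\<bar> \<le> 12 * \<bar>y\<bar>"
    using abs_omega_le[of x y] by simp_all
  have "4 * 1 * y^2 / 14 \<le> 4 * x^2 * y^2 / r1sq x y"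
    using R x2 by (intro frac_le mult_mono) auto
  then show "2/7 * \<bar>y\<bar>^2 \<le> \<bar>omega_plus x y\<bar> * \<bar>omega_minus x y\<bar>"
    using omega_plus_times_omega_minus[of x y] R by (simp add: abs_mult[symmetric])
qed

lemma lower_bound_from_product:
  fixes p q t m M :: real
  assumes "0 \<le> p" "0 \<le> q" "q \<le> M * t" "m * t^2 \<le> p * q" "0 < M"
  shows "m / M * t \<le> p"
proof -
  have "0 \<le> M * t"
    using assms(2,3) by linarith
  then have "0 \<le> t"
    using assms(5) by (simp add: zero_le_mult_iff)
  have "(m * t) * t \<le> (p * M) * t"
    using assms mult_left_mono[OF assms(3,1)] by (simp add: power2_eq_square mult_ac)
  then have "m * t \<le> p * M" if "t > 0"
    using that by simp
  then show ?thesis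
    using \<open>0 \<le> t\<close> assms(1,5) by (cases "t = 0") (simp_all add: field_simps)
qed

lemma abs_omega_ge_on_wedge:
  assumes "(x, y) \<in> wedge (1/10)"
  shows "1/42 * \<bar>y\<bar> \<le> \<bar>omega_plus x y\<bar>" "1/42 * \<bar>y\<bar> \<le> \<bar>omega_minus x y\<bar>"
proof -
  note bounds = omega_bounds_on_wedge[OF assms]
  show "1/42 * \<bar>y\<bar> \<le> \<bar>omega_plus x y\<bar>"
    using lower_bound_from_product[OF _ _ bounds(2,3)] by simp
  show "1/42 * \<bar>y\<bar> \<le> \<bar>omega_minus x y\<bar>"
    using lower_bound_from_product[OF _ _ bounds(1) bounds(3)[unfolded mult.commute[of "\<bar>omega_plus x y\<bar>"]]]
    by simp
qed

theorem lemma4p1: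
  shows "(\<exists>U. regR - {p0} \<subseteq> U \<and> smooth_on U (\<lambda>p. omega_plus (fst p) (snd p))
                                \<and> smooth_on U (\<lambda>p. omega_minus (fst p) (snd p)))
    \<and> (\<lambda>p. omega_plus (fst p) (snd p)
            - ((fst p - 2) + sqrt ((fst p - 2)^2 + 32 * (snd p)^2)) / 4)
        \<in> O[at p0 within regR](\<lambda>p. (fst p - 2)^2 + 32 * (snd p)^2)
    \<and> (\<lambda>p. omega_minus (fst p) (snd p)
            - ((fst p - 2) - sqrt ((fst p - 2)^2 + 32 * (snd p)^2)) / 4)
        \<in> O[at p0 within regR](\<lambda>p. (fst p - 2)^2 + 32 * (snd p)^2)
    \<and> (\<forall>(x, y) \<in> regR_plus. 0 \<le> omega_plus x y \<and> omega_plus x y \<le> 2 * \<bar>y\<bar>)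
    \<and> (\<forall>(x, y) \<in> regR_minus. - 2 * \<bar>y\<bar> \<le> omega_minus x y \<and> omega_minus x y \<le> 0)
    \<and> (\<forall>a::real. 0 < a \<and> a \<le> 1/10 \<longrightarrow>
         (\<exists>C>0. \<forall>(x, y) \<in> wedge a.
             \<bar>omega_plus x y\<bar> \<ge> C * \<bar>y\<bar> \<and> \<bar>omega_minus x y\<bar> \<ge> C * \<bar>y\<bar>))"
proof (intro conjI allI impI)
  show "\<exists>U. regR - {p0} \<subseteq> U \<and> smooth_on U (\<lambda>p. omega_plus (fst p) (snd p))
                                \<and> smooth_on U (\<lambda>p. omega_minus (fst p) (snd p))"
    using smooth_on_omega by (intro exI[of _ "{p. 0 < fst p} - {p0}"]) (auto simp: regR_def)
  show "\<forall>(x, y) \<in> regR_plus. 0 \<le> omega_plus x y \<and> omega_plus x y \<le> 2 * \<bar>y\<bar>"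
    using omega_plus_bounds by (auto simp: regR_plus_def regR_def)
  show "\<forall>(x, y) \<in> regR_minus. - 2 * \<bar>y\<bar> \<le> omega_minus x y \<and> omega_minus x y \<le> 0"
    using omega_minus_bounds by (auto simp: regR_minus_def)
  fix a :: real
  assume "0 < a \<and> a \<le> 1/10"
  then have "wedge a \<subseteq> wedge (1/10)"
    by (simp add: wedge_mono)
  then show "\<exists>C>0. \<forall>(x, y) \<in> wedge a.
      \<bar>omega_plus x y\<bar> \<ge> C * \<bar>y\<bar> \<and> \<bar>omega_minus x y\<bar> \<ge> C * \<bar>y\<bar>"
    using abs_omega_ge_on_wedge by (intro exI[of _ "1/42"]) auto
qed (rule omega_plus_expansion omega_minus_expansion)+

end
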